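(* Let $\{K_1,\ldots,K_n\}$ be a strictly totally positive structure on $\mathbb{R}^n$. Then for every $j=2,\ldots,n$ the intersection $\operatorname{int}(K_j)\cap\barwedge^j\mathbb{R}^n$ contains a nonzero element.
   Context: A proper cone is a closed convex cone that is pointed and solid. $\wedge^j\mathbb{R}^n$ is the $j$th exterior power of $\mathbb{R}^n$; $\barwedge^j\mathbb{R}^n$ (the Grassmann cone) is the set of simple $j$-vectors, i.e. elements of the form $x_1\wedge\cdots\wedge x_j$ with $x_1,\ldots,x_j\in\mathbb{R}^n$. $\wedge^jA$ is the operator with $(\wedge^jA)(x_1\wedge\cdots\wedge x_j)=Ax_1\wedge\cdots\wedge Ax_j$. A totally positive structure is a family $\{K_1,\ldots,K_n\}$ with $K_j\subset\wedge^j\mathbb{R}^n$ a proper cone; a linear operator $A$ on $\mathbb{R}^n$ is GSTP with respect to it if $\wedge^jA(K_j\setminus\{0\})\subseteq\operatorname{int}(K_j)$ for all $j=1,\ldots,n$. The structure is strictly totally positive if there exists at least one operator that is GSTP with respect to it. *)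

theory Defs
  imports "HOL-Analysis.Analysis"
begin

text \<open>Model: R^n is real^'n for a finite linearly ordered index type 'n (n = CARD('n)).
  The j-th exterior power is realised in coordinates with respect to the standard basis
  e_I (I a j-subset of 'n, wedge taken in increasing order) as the subspace
  ext_space j of real^('n set) of vectors supported on the j-subsets.\<close>

definition ext_space :: "nat \<Rightarrow> (real^('n::{finite,linorder} set)) set" where
  "ext_space j = {w. \<forall>I. card I \<noteq> j \<longrightarrow> w $ I = 0}"

definition detj :: "nat \<Rightarrow> (nat \<Rightarrow> nat \<Rightarrow> real) \<Rightarrow> real" where
  "detj j M = (\<Sum>p | p permutes {..<j}. of_int (sign p) * (\<Prod>k<j. M (p k) k))"

definition wedge :: "nat \<Rightarrow> (nat \<Rightarrow> real^('n::{finite,linorder})) \<Rightarrow> real^('n set)" where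
  "wedge j x = (\<chi> I. if card I = j
      then detj j (\<lambda>r k. x k $ (sorted_list_of_set I ! r)) else 0)"

definition simple_vecs :: "nat \<Rightarrow> (real^('n::{finite,linorder} set)) set" where
  "simple_vecs j = {wedge j x | x. True}"

text \<open>The j-th exterior power of A (the j-th compound matrix acting on coordinates):
  (ext_op j A) (x_0 wedge ... wedge x_(j-1)) = A x_0 wedge ... wedge A x_(j-1).\<close>
definition ext_op :: "nat \<Rightarrow> (real^('n::{finite,linorder}))^('n::{finite,linorder}) \<Rightarrow> real^('n::{finite,linorder} set) \<Rightarrow> real^('n::{finite,linorder} set)" where
  "ext_op j A w = (\<chi> I. if card I = j then
      (\<Sum>J | card J = j. detj j (\<lambda>r s. A $ (sorted_list_of_set I ! r) $ (sorted_list_of_set J ! s)) * w $ J)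
      else 0)"

definition ext_interior :: "nat \<Rightarrow> (real^('n::{finite,linorder} set)) set \<Rightarrow> (real^('n set)) set" where
  "ext_interior j K = (top_of_set (ext_space j)) interior_of K"

definition proper_cone :: "nat \<Rightarrow> (real^('n::{finite,linorder} set)) set \<Rightarrow> bool" where
  "proper_cone j K \<longleftrightarrow> K \<subseteq> ext_space j \<and> convex K \<and> cone K \<and> closed K
     \<and> K \<inter> uminus ` K = {0} \<and> ext_interior j K \<noteq> {}"

definition TP_structure :: "(nat \<Rightarrow> (real^('n::{finite,linorder} set)) set) \<Rightarrow> bool" where
  "TP_structure K \<longleftrightarrow> (\<forall>j\<in>{1..CARD('n)}. proper_cone j (K j))"

definition GSTP :: "(nat \<Rightarrow> (real^('n::{finite,linorder} set)) set) \<Rightarrow> (real^('n::{finite,linorder}))^('n::{finite,linorder}) \<Rightarrow> bool" where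
  "GSTP K A \<longleftrightarrow> (\<forall>j\<in>{1..CARD('n)}. ext_op j A ` (K j - {0}) \<subseteq> ext_interior j (K j))"

definition STP_structure :: "(nat \<Rightarrow> (real^('n::{finite,linorder} set)) set) \<Rightarrow> bool" where
  "STP_structure K \<longleftrightarrow> TP_structure K \<and> (\<exists>A. GSTP K A)"

end

theory Submission
  imports Defs
begin

text \<open>
  Fix \<open>j\<close> and let \<open>T\<close> be the \<open>j\<close>-th compound of a GSTP operator \<open>A\<close>; it maps
  \<open>K\<^sub>j - {0}\<close> into the interior of \<open>K\<^sub>j\<close> relative to the \<open>j\<close>-th exterior power.
  By Brouwer's theorem \<open>T\<close> has an eigenvector \<open>u\<close> in that interior, with eigenvalue \<open>r > 0\<close>,
  and by compactness of a base of the cone, \<open>T z - \<epsilon> \<langle>a, z\<rangle> u \<in> K\<^sub>j\<close> for all \<open>z \<in> K\<^sub>j\<close>,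
  where \<open>a\<close> is a functional dominating the norm on \<open>K\<^sub>j\<close>. Hence the order interval
  \<open>[\<alpha> u, \<beta> u]\<close> enclosing \<open>(T/r)\<^sup>k y\<close> shrinks geometrically. If no iterate of \<open>y\<close> enters
  the interior of \<open>K\<^sub>j\<close> or of \<open>-K\<^sub>j\<close>, the interval straddles \<open>0\<close> and therefore
  \<open>\<langle>a, (T/r)\<^sup>k y\<rangle> \<rightarrow> 0\<close>. As \<open>\<langle>a, u\<rangle> = 1\<close> and \<open>u\<close> is a combination of the basis vectors
  \<open>e\<^sub>I = e\<^sub>i\<^sub>1 \<and> \<dots> \<and> e\<^sub>i\<^sub>j\<close>, this cannot happen for all of them. Finally, compounds map
  simple \<open>j\<close>-vectors to simple ones (Cauchy--Binet), and simple vectors are closed under negation.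
\<close>

section \<open>Determinants of nat-indexed square matrices\<close>

lemma detj_cong:
  assumes "\<And>r k. r < j \<Longrightarrow> k < j \<Longrightarrow> M r k = M' r k"
  shows "detj j M = detj j M'"
  unfolding detj_def
proof (rule sum.cong[OF refl])
  fix p assume "p \<in> {p. p permutes {..<j}}"
  then have p: "p permutes {..<j}" by simp
  show "of_int (sign p) * (\<Prod>k<j. M (p k) k) = of_int (sign p) * (\<Prod>k<j. M' (p k) k)"
    using assms permutes_in_image[OF p] by (intro arg_cong2[where f="(*)"] refl prod.cong) auto
qed

lemma detj_permute_cols:
  assumes s: "s permutes {..<j}"
  shows "detj j (\<lambda>r k. M r (s k)) = of_int (sign s) * detj j M"
proof -
  let ?U = "{..<j}"
  have fin: "finite ?U" by simp
  have "detj j (\<lambda>r k. M r (s k)) = (\<Sum>p\<in>{p. p permutes ?U}. of_int (sign p) * (\<Prod>k<j. M (p k) (s k)))"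
    unfolding detj_def by simp
  also have "\<dots> = (\<Sum>p\<in>{p. p permutes ?U}. of_int (sign (p \<circ> s)) * (\<Prod>k<j. M ((p \<circ> s) k) (s k)))"
    by (rule sum_permutations_compose_right[OF s])
  also have "\<dots> = (\<Sum>p\<in>{p. p permutes ?U}. of_int (sign s) * (of_int (sign p) * (\<Prod>k<j. M (p k) k)))"
  proof (rule sum.cong[OF refl])
    fix p assume "p \<in> {p. p permutes ?U}"
    then have p: "p permutes ?U" by simp
    have "(\<Prod>k<j. M ((p \<circ> s) k) (s k)) = (\<Prod>k\<in>?U. (\<lambda>k. M (p k) k) (s k))" by simp
    also have "\<dots> = (\<Prod>k<j. M (p k) k)"
      using prod.permute[OF s, of "\<lambda>k. M (p k) k"] by (simp add: o_def)
    finally have e: "(\<Prod>k<j. M ((p \<circ> s) k) (s k)) = (\<Prod>k<j. M (p k) k)" .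
    have "sign (p \<circ> s) = sign p * sign s"
      using sign_compose permutes_imp_permutation[OF fin p] permutes_imp_permutation[OF fin s] by blast
    then show "of_int (sign (p \<circ> s)) * (\<Prod>k<j. M ((p \<circ> s) k) (s k)) =
        of_int (sign s) * (of_int (sign p) * (\<Prod>k<j. M (p k) k))" unfolding e by simp
  qed
  also have "\<dots> = of_int (sign s) * detj j M"
    unfolding detj_def by (simp add: sum_distrib_left)
  finally show ?thesis .
qed

lemma detj_eq_0_if_not_inj:
  assumes "\<not> inj_on f {..<j}"
  shows "detj j (\<lambda>r k. M r (f k)) = 0"
proof -
  obtain a b where ab: "a < j" "b < j" "a \<noteq> b" "f a = f b"
    using assms unfolding inj_on_def lessThan_iff by blast
  let ?t = "Transposition.transpose a b"
  have t: "?t permutes {..<j}" using ab by (intro permutes_swap_id) auto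
  have "detj j (\<lambda>r k. M r (f (?t k))) = detj j (\<lambda>r k. M r (f k))"
    using ab(4) by (intro arg_cong[where f = "detj j"]) (simp add: Transposition.transpose_def fun_eq_iff)
  moreover have "detj j (\<lambda>r k. M r (f (?t k))) = - detj j (\<lambda>r k. M r (f k))"
    using detj_permute_cols[OF t, of "\<lambda>r k. M r (f k)"] ab(3) by (simp add: sign_swap_id)
  ultimately show ?thesis by linarith
qed

lemma detj_uminus_col0:
  assumes "0 < j"
  shows "detj j (\<lambda>r k. if k = 0 then - M r k else M r k) = - detj j M"
proof -
  have "(\<Prod>k<j. if k = 0 then - M (p k) k else M (p k) k) = - (\<Prod>k<j. M (p k) k)" for p
  proof -
    have "0 \<in> {..<j}" using assms by simp
    moreover have "(\<Prod>k\<in>{..<j} - {0}. if k = 0 then - M (p k) k else M (p k) k)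
        = (\<Prod>k\<in>{..<j} - {0}. M (p k) k)"
      by (rule prod.cong) auto
    ultimately show ?thesis
      using prod.remove[of "{..<j}" 0 "\<lambda>k. if k = 0 then - M (p k) k else M (p k) k"]
        prod.remove[of "{..<j}" 0 "\<lambda>k. M (p k) k"]
      by simp
  qed
  then show ?thesis unfolding detj_def by (simp add: sum_negf)
qed

lemma detj_identity: "detj j (\<lambda>r k. if r = k then 1 else 0) = 1"
proof -
  have "of_int (sign p) * (\<Prod>k<j. if p k = k then 1 else 0) = (if p = id then 1 else (0::real))"
    if p: "p permutes {..<j}" for p
  proof (cases "p = id")
    case False
    then obtain k where k: "p k \<noteq> k" by (metis eq_id_iff)
    then have "k < j" using p by (meson lessThan_iff permutes_not_in)
    with k False show ?thesis by (auto intro!: prod_zero)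
  qed (simp add: sign_id)
  then have "detj j (\<lambda>r k. if r = k then 1 else 0)
      = (\<Sum>p | p permutes {..<j}. if p = id then 1 else (0::real))"
    unfolding detj_def by (intro sum.cong) auto
  also have "\<dots> = 1"
    by (simp add: finite_permutations permutes_id)
  finally show ?thesis .
qed

lemma detj_zero_col:
  assumes k: "k < j" and z: "\<And>r. r < j \<Longrightarrow> M r k = 0"
  shows "detj j M = 0"
  unfolding detj_def
proof (intro sum.neutral ballI)
  fix p assume "p \<in> {p. p permutes {..<j}}"
  then have p: "p permutes {..<j}" by simp
  have "p k < j" using permutes_in_image[OF p] k by simp
  then have "(\<Prod>k<j. M (p k) k) = 0" using k z by (intro prod_zero bexI[of _ k]) auto
  then show "of_int (sign p) * (\<Prod>k<j. M (p k) k) = 0" by simp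
qed

lemma detj_matrix_mult_expand:
  fixes B :: "nat \<Rightarrow> 'n::finite \<Rightarrow> real" and X :: "'n \<Rightarrow> nat \<Rightarrow> real"
  shows "detj j (\<lambda>r k. \<Sum>i\<in>UNIV. B r i * X i k)
    = (\<Sum>f\<in>{..<j} \<rightarrow>\<^sub>E UNIV. (\<Prod>k<j. X (f k) k) * detj j (\<lambda>r k. B r (f k)))"
proof -
  let ?P = "{..<j} \<rightarrow>\<^sub>E (UNIV::'n set)"
  have "detj j (\<lambda>r k. \<Sum>i\<in>UNIV. B r i * X i k)
      = (\<Sum>p | p permutes {..<j}. of_int (sign p) * (\<Sum>f\<in>?P. \<Prod>k<j. B (p k) (f k) * X (f k) k))"
    unfolding detj_def by (simp add: prod_sum_PiE)
  also have "\<dots> = (\<Sum>f\<in>?P. \<Sum>p | p permutes {..<j}.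
      (\<Prod>k<j. X (f k) k) * (of_int (sign p) * (\<Prod>k<j. B (p k) (f k))))"
    by (subst sum.swap) (simp add: sum_distrib_left prod.distrib ac_simps)
  also have "\<dots> = (\<Sum>f\<in>?P. (\<Prod>k<j. X (f k) k) * detj j (\<lambda>r k. B r (f k)))"
    unfolding detj_def by (simp add: sum_distrib_left)
  finally show ?thesis .
qed

lemma bij_betw_permutes_compose:
  assumes e: "bij_betw e S T"
  shows "bij_betw (\<lambda>s. restrict (e \<circ> s) S) {s. s permutes S} {f \<in> S \<rightarrow>\<^sub>E UNIV. bij_betw f S T}"
proof (rule bij_betw_imageI)
  show "inj_on (\<lambda>s. restrict (e \<circ> s) S) {s. s permutes S}"
  proof (rule inj_onI, rule ext)
    fix s s' x
    assume s: "s \<in> {s. s permutes S}" and s': "s' \<in> {s. s permutes S}"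
      and eq: "restrict (e \<circ> s) S = restrict (e \<circ> s') S"
    show "s x = s' x"
    proof (cases "x \<in> S")
      case True
      then have "e (s x) = e (s' x)" using fun_cong[OF eq, of x] by simp
      moreover have "s x \<in> S" "s' x \<in> S" using s s' True permutes_in_image by fastforce+
      ultimately show ?thesis using e by (auto simp: bij_betw_def dest: inj_onD)
    next
      case False
      then show ?thesis using s s' by (simp add: permutes_not_in)
    qed
  qed
  show "(\<lambda>s. restrict (e \<circ> s) S) ` {s. s permutes S} = {f \<in> S \<rightarrow>\<^sub>E UNIV. bij_betw f S T}"
  proof (intro equalityI subsetI)
    fix f assume "f \<in> (\<lambda>s. restrict (e \<circ> s) S) ` {s. s permutes S}"
    then obtain s where s: "s permutes S" and f: "f = restrict (e \<circ> s) S" by blast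
    have "bij_betw (e \<circ> s) S T" using bij_betw_trans[OF permutes_imp_bij[OF s] e] .
    then show "f \<in> {f \<in> S \<rightarrow>\<^sub>E UNIV. bij_betw f S T}"
      unfolding f using bij_betw_cong[of S "restrict (e \<circ> s) S" "e \<circ> s" T] by simp
  next
    fix f assume f: "f \<in> {f \<in> S \<rightarrow>\<^sub>E UNIV. bij_betw f S T}"
    define s where "s x = (if x \<in> S then inv_into S e (f x) else x)" for x
    have "bij_betw (inv_into S e \<circ> f) S S"
      using f bij_betw_trans[OF _ bij_betw_inv_into[OF e]] by blast
    then have "bij_betw s S S" using bij_betw_cong[of S s "inv_into S e \<circ> f" S] by (simp add: s_def)
    then have "s permutes S" by (rule bij_imp_permutes) (simp add: s_def)
    moreover have "restrict (e \<circ> s) S = f"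
    proof
      fix x show "restrict (e \<circ> s) S x = f x"
      proof (cases "x \<in> S")
        case True
        then have "f x \<in> e ` S" using f bij_betw_imp_surj_on[OF e] bij_betwE by fastforce
        then show ?thesis using True unfolding s_def by (simp add: f_inv_into_f)
      next
        case False
        then show ?thesis using f PiE_arb[of f S "\<lambda>_. UNIV" x] by simp
      qed
    qed
    ultimately show "f \<in> (\<lambda>s. restrict (e \<circ> s) S) ` {s. s permutes S}"
      by (intro image_eqI[of f _ s]) simp_all
  qed
qed

lemma cauchy_binet:
  fixes B :: "nat \<Rightarrow> 'n::{finite,linorder} \<Rightarrow> real" and X :: "'n \<Rightarrow> nat \<Rightarrow> real"
  shows "detj j (\<lambda>r k. \<Sum>i\<in>UNIV. B r i * X i k)
    = (\<Sum>J | card J = j. detj j (\<lambda>r s. B r (sorted_list_of_set J ! s))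
          * detj j (\<lambda>r k. X (sorted_list_of_set J ! r) k))"
proof -
  let ?P = "{..<j} \<rightarrow>\<^sub>E (UNIV::'n set)"
  define G where "G f = (\<Prod>k<j. X (f k) k) * detj j (\<lambda>r k. B r (f k))" for f
  have "detj j (\<lambda>r k. \<Sum>i\<in>UNIV. B r i * X i k) = (\<Sum>f\<in>?P. G f)"
    unfolding G_def by (rule detj_matrix_mult_expand)
  also have "\<dots> = (\<Sum>f | f \<in> ?P \<and> inj_on f {..<j}. G f)"
  proof (rule sum.mono_neutral_right)
    show "\<forall>f\<in>?P - {f. f \<in> ?P \<and> inj_on f {..<j}}. G f = 0"
      unfolding G_def using detj_eq_0_if_not_inj by auto
  qed (auto simp: finite_PiE)
  also have "\<dots> = (\<Sum>J | card J = j. \<Sum>f | f \<in> {f \<in> ?P. inj_on f {..<j}} \<and> f ` {..<j} = J. G f)"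
  proof (rule sum.group[symmetric])
    show "(\<lambda>f. f ` {..<j}) ` {f \<in> ?P. inj_on f {..<j}} \<subseteq> {J. card J = j}"
      by (intro image_subsetI) (simp add: card_image)
  qed (simp_all add: finite_PiE)
  also have "\<dots> = (\<Sum>J | card J = j. \<Sum>f | f \<in> ?P \<and> bij_betw f {..<j} J. G f)"
    unfolding bij_betw_def by (simp add: conj_assoc)
  also have "\<dots> = (\<Sum>J | card J = j. detj j (\<lambda>r s. B r (sorted_list_of_set J ! s))
          * detj j (\<lambda>r k. X (sorted_list_of_set J ! r) k))"
  proof (rule sum.cong[OF refl])
    fix J :: "'n set" assume "J \<in> {J. card J = j}"
    then have e: "bij_betw ((!) (sorted_list_of_set J)) {..<j} J"
      by (intro bij_betw_nth) auto
    let ?e = "\<lambda>k. sorted_list_of_set J ! k"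
    have G_perm: "G (restrict (?e \<circ> s) {..<j})
        = detj j (\<lambda>r s. B r (?e s)) * (of_int (sign s) * (\<Prod>k<j. X (?e (s k)) k))"
      if s: "s permutes {..<j}" for s
    proof -
      have "detj j (\<lambda>r k. B r (restrict (?e \<circ> s) {..<j} k)) = detj j (\<lambda>r k. B r (?e (s k)))"
        by (rule detj_cong) simp
      then show ?thesis
        unfolding G_def detj_permute_cols[OF s, of "\<lambda>r k. B r (?e k)"] by simp
    qed
    have "(\<Sum>f | f \<in> ?P \<and> bij_betw f {..<j} J. G f)
        = (\<Sum>s | s permutes {..<j}. G (restrict (?e \<circ> s) {..<j}))"
      by (rule sum.reindex_bij_betw[OF bij_betw_permutes_compose[OF e], symmetric])
    also have "\<dots> = (\<Sum>s | s permutes {..<j}.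
        detj j (\<lambda>r s. B r (?e s)) * (of_int (sign s) * (\<Prod>k<j. X (?e (s k)) k)))"
      by (rule sum.cong) (simp_all add: G_perm)
    also have "\<dots> = detj j (\<lambda>r s. B r (?e s)) * detj j (\<lambda>r k. X (?e r) k)"
      unfolding detj_def[of j "\<lambda>r k. X (?e r) k"] by (simp add: sum_distrib_left)
    finally show "(\<Sum>f | f \<in> ?P \<and> bij_betw f {..<j} J. G f)
        = detj j (\<lambda>r s. B r (?e s)) * detj j (\<lambda>r k. X (?e r) k)" .
  qed
  finally show ?thesis .
qed

section \<open>Strictly positive maps on a relatively proper cone\<close>

lemma linear_funpow:
  fixes f :: "'a::real_vector \<Rightarrow> 'a"
  assumes "linear f"
  shows "linear (f ^^ n)"
proof (induction n)
  case (Suc n)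
  show ?case using linear_compose[OF Suc.IH assms] by (simp add: o_def)
qed (simp add: linear_id[unfolded id_def])

lemma iterates_not_all_vanish:
  fixes S :: "'a::real_inner \<Rightarrow> 'a"
  assumes "linear S" "S u = u" "a \<bullet> u \<noteq> 0" "finite B" "u \<in> span B"
  shows "\<exists>v\<in>B. \<not> (\<lambda>k. a \<bullet> (S ^^ k) v) \<longlonglongrightarrow> 0"
proof (rule ccontr)
  assume "\<not> ?thesis"
  then have vanish: "(\<lambda>k. a \<bullet> (S ^^ k) v) \<longlonglongrightarrow> 0" if "v \<in> B" for v
    using that by blast
  obtain c where c: "u = (\<Sum>v\<in>B. c v *\<^sub>R v)"
    using assms(4,5) span_finite by blast
  have "a \<bullet> u = (\<Sum>v\<in>B. c v * (a \<bullet> (S ^^ k) v))" for k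
  proof -
    have "(S ^^ k) u = u" by (induction k) (simp_all add: assms(2))
    then have "a \<bullet> u = a \<bullet> (S ^^ k) (\<Sum>v\<in>B. c v *\<^sub>R v)" by (simp flip: c)
    also have "\<dots> = a \<bullet> (\<Sum>v\<in>B. c v *\<^sub>R (S ^^ k) v)"
      using linear_funpow[OF assms(1), of k] by (simp add: linear_sum linear_cmul)
    finally show ?thesis by (simp add: inner_sum_right)
  qed
  moreover have "(\<lambda>k. \<Sum>v\<in>B. c v * (a \<bullet> (S ^^ k) v)) \<longlonglongrightarrow> (\<Sum>v\<in>B. c v * 0)"
    using vanish by (intro tendsto_sum tendsto_mult tendsto_const)
  ultimately have "(\<lambda>k. a \<bullet> u) \<longlonglongrightarrow> 0" by simp
  then show False using assms(3) by (simp add: LIMSEQ_const_iff)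
qed

locale relatively_proper_cone =
  fixes E :: "'v::euclidean_space set" and K :: "'v set"
  assumes subspace_E: "subspace E" and K_subset: "K \<subseteq> E"
    and convex_K: "convex K" and cone_K: "cone K" and closed_K: "closed K"
    and pointed_K: "K \<inter> uminus ` K = {0}"
    and nontrivial_E: "\<exists>v\<in>E. v \<noteq> 0" \<comment> \<open>for \<open>E = {0}\<close>, \<open>0\<close> would lie in its own relative interior\<close>
    and relint_nonempty: "top_of_set E interior_of K \<noteq> {}"
begin

abbreviation relint :: "'v set" where
  "relint \<equiv> top_of_set E interior_of K"

lemma relint_iff: "z \<in> relint \<longleftrightarrow> z \<in> E \<and> (\<exists>e>0. \<forall>y\<in>E. dist y z < e \<longrightarrow> y \<in> K)"
proof
  assume "z \<in> relint"
  then obtain U where "openin (top_of_set E) U" "z \<in> U" "U \<subseteq> K"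
    unfolding interior_of_def by auto
  then show "z \<in> E \<and> (\<exists>e>0. \<forall>y\<in>E. dist y z < e \<longrightarrow> y \<in> K)"
    unfolding openin_euclidean_subtopology_iff by blast
next
  assume "z \<in> E \<and> (\<exists>e>0. \<forall>y\<in>E. dist y z < e \<longrightarrow> y \<in> K)"
  then obtain e where e: "z \<in> E" "e > 0" "\<forall>y\<in>E. dist y z < e \<longrightarrow> y \<in> K" by blast
  then have "openin (top_of_set E) (E \<inter> ball z e)" "z \<in> E \<inter> ball z e" "E \<inter> ball z e \<subseteq> K"
    by (auto simp: openin_open_Int dist_commute)
  then show "z \<in> relint" unfolding interior_of_def by blast
qed

lemma relint_subset_K: "z \<in> relint \<Longrightarrow> z \<in> K"
  using relint_iff by force

lemma relint_subset_E: "z \<in> relint \<Longrightarrow> z \<in> E"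
  using relint_iff by force

lemma convex_cone_K: "convex_cone K"
  using convex_K cone_K pointed_K unfolding convex_cone_def cone_def conic_def by auto

lemma scaleR_in_K: "0 \<le> c \<Longrightarrow> x \<in> K \<Longrightarrow> c *\<^sub>R x \<in> K"
  using convex_cone_scaleR[OF convex_cone_K] .

lemma add_in_K: "x \<in> K \<Longrightarrow> y \<in> K \<Longrightarrow> x + y \<in> K"
  using convex_cone_add[OF convex_cone_K] .

lemma sum_in_K: "finite S \<Longrightarrow> (\<And>v. v \<in> S \<Longrightarrow> f v \<in> K) \<Longrightarrow> sum f S \<in> K"
  by (induction S rule: finite_induct)
    (auto simp: convex_cone_contains_0[OF convex_cone_K] add_in_K)

lemma eq_0_if_in_K_uminus: "x \<in> K \<Longrightarrow> - x \<in> K \<Longrightarrow> x = 0"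
  using pointed_K by (metis IntI image_eqI minus_minus singletonD)

lemma scaleR_in_relint:
  assumes "c > 0" "z \<in> relint"
  shows "c *\<^sub>R z \<in> relint"
proof -
  obtain e where e: "z \<in> E" "e > 0" "\<forall>y\<in>E. dist y z < e \<longrightarrow> y \<in> K"
    using assms relint_iff by blast
  have "y \<in> K" if y: "y \<in> E" "dist y (c *\<^sub>R z) < c * e" for y
  proof -
    have "(1/c) *\<^sub>R y - z = (1/c) *\<^sub>R (y - c *\<^sub>R z)"
      using assms(1) by (simp add: scaleR_diff_right)
    then have "dist ((1/c) *\<^sub>R y) z = (1/c) * dist y (c *\<^sub>R z)"
      using assms(1) unfolding dist_norm by simp
    also have "\<dots> < e" using y assms(1) by (simp add: field_simps)
    finally have "(1/c) *\<^sub>R y \<in> K"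
      using e y subspace_E by (simp add: subspace_scale)
    from scaleR_in_K[OF _ this, of c] show "y \<in> K" using assms(1) by simp
  qed
  moreover have "c *\<^sub>R z \<in> E" using e subspace_E by (simp add: subspace_scale)
  ultimately show ?thesis using relint_iff assms(1) e(2) by (meson mult_pos_pos)
qed

lemma scaleR_in_relint_iff: "c > 0 \<Longrightarrow> c *\<^sub>R z \<in> relint \<longleftrightarrow> z \<in> relint"
  using scaleR_in_relint[of c z] scaleR_in_relint[of "1 / c" "c *\<^sub>R z"] by auto

lemma add_in_relint:
  assumes "z \<in> relint" "k \<in> K"
  shows "z + k \<in> relint"
proof -
  obtain e where e: "z \<in> E" "e > 0" "\<forall>y\<in>E. dist y z < e \<longrightarrow> y \<in> K"
    using assms relint_iff by blast
  have k: "k \<in> E" using assms K_subset by auto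
  have "y \<in> K" if y: "y \<in> E" "dist y (z + k) < e" for y
  proof -
    have "y - k \<in> K" using e y k subspace_E by (simp add: subspace_diff dist_norm algebra_simps)
    from add_in_K[OF this assms(2)] show ?thesis by simp
  qed
  moreover have "z + k \<in> E" using e k subspace_E by (simp add: subspace_add)
  ultimately show ?thesis using relint_iff e(2) by blast
qed

lemma zero_notin_relint: "0 \<notin> relint"
proof
  assume "0 \<in> relint"
  then obtain e where e: "e > 0" "\<forall>y\<in>E. dist y 0 < e \<longrightarrow> y \<in> K" using relint_iff by blast
  obtain v where v: "v \<in> E" "v \<noteq> 0" using nontrivial_E by blast
  define w where "w = (e / (2 * norm v)) *\<^sub>R v"
  have "norm w < e" "w \<noteq> 0" using e v by (simp_all add: w_def)
  moreover have "w \<in> E" using v subspace_E by (simp add: w_def subspace_scale)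
  ultimately have "w \<in> K" "- w \<in> K" using e subspace_E by (simp_all add: subspace_neg)
  with \<open>w \<noteq> 0\<close> show False using eq_0_if_in_K_uminus by blast
qed

lemma exists_dominating_functional:
  obtains a :: 'v and b :: real where "b > 0" "\<forall>x\<in>K. b * norm x \<le> a \<bullet> x"
proof -
  let ?C = "K \<inter> sphere 0 1"
  have "0 \<notin> convex hull ?C"
  proof
    assume "0 \<in> convex hull ?C"
    then obtain S u where S: "finite S" "S \<subseteq> ?C" "\<forall>x\<in>S. 0 \<le> u x" "sum u S = 1"
        "(\<Sum>v\<in>S. u v *\<^sub>R v) = 0"
      unfolding convex_hull_explicit by blast
    obtain c where c: "c \<in> S" "u c > 0"
      using S(3,4) sum_nonpos[of S u] by (metis not_less zero_less_one not_le)
    have "(\<Sum>v\<in>S-{c}. u v *\<^sub>R v) \<in> K"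
      using S by (intro sum_in_K scaleR_in_K) auto
    moreover have "- (u c *\<^sub>R c) = (\<Sum>v\<in>S-{c}. u v *\<^sub>R v)"
      using sum.remove[OF S(1) c(1), of "\<lambda>v. u v *\<^sub>R v"] S(5) by (simp add: add_eq_0_iff)
    moreover have "u c *\<^sub>R c \<in> K" using S(2) c by (auto intro: scaleR_in_K)
    ultimately have "u c *\<^sub>R c = 0" by (metis eq_0_if_in_K_uminus)
    moreover have "norm c = 1" using S(2) c(1) by auto
    ultimately show False using c(2) by simp
  qed
  moreover have "closed (convex hull ?C)"
    using closed_K by (simp add: closed_Int_compact compact_convex_hull compact_imp_closed)
  ultimately obtain a b where ab: "0 < b" "\<forall>x\<in>convex hull ?C. b < a \<bullet> x"
    using separating_hyperplane_closed_0[OF convex_convex_hull] by blast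
  have "b * norm x \<le> a \<bullet> x" if x: "x \<in> K" for x
  proof (cases "x = 0")
    case False
    have "(1 / norm x) *\<^sub>R x \<in> ?C" using x False by (simp add: scaleR_in_K)
    then have "(1 / norm x) *\<^sub>R x \<in> convex hull ?C" by (rule hull_inc)
    then have "b < a \<bullet> ((1 / norm x) *\<^sub>R x)" using ab(2) by blast
    then have "b < a \<bullet> x / norm x" by simp
    then show ?thesis using False by (simp add: pos_less_divide_eq)
  qed simp
  then show ?thesis using that ab(1) by blast
qed

lemma compact_base:
  assumes "b > 0" "\<forall>x\<in>K. b * norm x \<le> a \<bullet> x"
  shows "compact (K \<inter> {x. a \<bullet> x = 1})"
proof -
  have "K \<inter> {x. a \<bullet> x = 1} \<subseteq> cball 0 (1/b)"
    using assms by (auto simp: field_simps)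
  then show ?thesis
    using closed_K closed_hyperplane[of a 1]
    by (meson bounded_cball bounded_subset closed_Int compact_eq_bounded_closed)
qed

lemma compact_subset_relint_margin:
  assumes "compact C" "C \<subseteq> relint"
  obtains e where "e > 0" "\<forall>x\<in>C. \<forall>y\<in>E. dist y x < e \<longrightarrow> y \<in> K"
proof (cases "C = {} \<or> E - K = {}")
  case True
  then have "\<forall>x\<in>C. \<forall>y\<in>E. dist y x < 1 \<longrightarrow> y \<in> K" by blast
  then show ?thesis using that[of 1] by simp
next
  case False
  then have ne: "C \<noteq> {}" "E - K \<noteq> {}" by auto
  have pos: "infdist x (E - K) > 0" if "x \<in> C" for x
  proof -
    have "x \<in> relint" using assms(2) that by blast
    then obtain e where e: "e > 0" "\<forall>y\<in>E. dist y x < e \<longrightarrow> y \<in> K"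
      unfolding relint_iff by blast
    have "e \<le> infdist x (E - K)"
      unfolding infdist_notempty[OF ne(2)]
    proof (rule cINF_greatest[OF ne(2)])
      fix y assume "y \<in> E - K"
      then show "e \<le> dist x y" using e by (force simp: dist_commute not_less)
    qed
    then show ?thesis using e by simp
  qed
  have "continuous_on C (\<lambda>x. infdist x (E - K))"
    by (rule continuous_on_infdist[OF continuous_on_id])
  then obtain x0 where x0: "x0 \<in> C" "\<forall>x\<in>C. infdist x0 (E - K) \<le> infdist x (E - K)"
    using continuous_attains_inf[OF assms(1) ne(1)] by blast
  show ?thesis
  proof (rule that[OF pos[OF x0(1)]], intro ballI impI)
    fix x y assume "x \<in> C" "y \<in> E" "dist y x < infdist x0 (E - K)"
    then have "dist x y < infdist x (E - K)"
      using x0(2) by (metis dist_commute order_less_le_trans)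
    then show "y \<in> K" using \<open>y \<in> E\<close> by (metis DiffI infdist_le not_less)
  qed
qed

lemma relint_order_unit:
  assumes "u \<in> relint" "y \<in> E"
  obtains c where "y + c *\<^sub>R u \<in> K" "c *\<^sub>R u - y \<in> K"
proof -
  obtain e where e: "e > 0" "\<forall>z\<in>E. dist z u < e \<longrightarrow> z \<in> K"
    using assms(1) relint_iff by blast
  define s where "s = e / (2 * (norm y + 1))"
  have n: "norm y + 1 > 0" by (simp add: add_nonneg_pos)
  then have s_pos: "s > 0" using e(1) by (simp add: s_def)
  have "s * norm y \<le> s * (norm y + 1)" using s_pos by simp
  also have "\<dots> = e / 2" using n by (simp add: s_def field_simps)
  finally have s: "s > 0" "s * norm y < e" using s_pos e(1) by simp_all
  have "u + s *\<^sub>R y \<in> K" "u - s *\<^sub>R y \<in> K"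
    using e s assms relint_subset_E subspace_E
    by (simp_all add: subspace_add subspace_diff subspace_scale dist_norm)
  then have "(1/s) *\<^sub>R (u + s *\<^sub>R y) \<in> K" "(1/s) *\<^sub>R (u - s *\<^sub>R y) \<in> K"
    using s by (simp_all add: scaleR_in_K)
  then show ?thesis
    using that[of "1/s"] s by (simp add: scaleR_add_right scaleR_diff_right add.commute)
qed

lemma nonneg_if_dominating:
  assumes "b > 0" "\<forall>x\<in>K. b * norm x \<le> a \<bullet> x" "x \<in> K"
  shows "0 \<le> a \<bullet> x" and "x \<noteq> 0 \<Longrightarrow> 0 < a \<bullet> x"
proof -
  have "b * norm x \<le> a \<bullet> x" using assms by blast
  then show "0 \<le> a \<bullet> x" using assms(1) by (smt (verit) mult_nonneg_nonneg norm_ge_zero)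
  show "0 < a \<bullet> x" if "x \<noteq> 0"
    using \<open>b * norm x \<le> a \<bullet> x\<close> assms(1) that by (smt (verit) mult_pos_pos zero_less_norm_iff)
qed

lemma contraction_step:
  assumes "linear S" "S u = u" "a \<bullet> u = 1"
    and contr: "\<forall>z\<in>K. S z - (\<delta> * (a \<bullet> z)) *\<^sub>R u \<in> K"
    and lo: "y - \<alpha> *\<^sub>R u \<in> K" and hi: "\<beta> *\<^sub>R u - y \<in> K"
  shows "S y - (\<alpha> + \<delta> * (a \<bullet> y - \<alpha>)) *\<^sub>R u \<in> K"
    and "(\<beta> - \<delta> * (\<beta> - a \<bullet> y)) *\<^sub>R u - S y \<in> K"
proof -
  have "S (y - \<alpha> *\<^sub>R u) - (\<delta> * (a \<bullet> (y - \<alpha> *\<^sub>R u))) *\<^sub>R u \<in> K"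
    using contr lo by blast
  moreover have "S (y - \<alpha> *\<^sub>R u) - (\<delta> * (a \<bullet> (y - \<alpha> *\<^sub>R u))) *\<^sub>R u
      = S y - (\<alpha> + \<delta> * (a \<bullet> y - \<alpha>)) *\<^sub>R u"
    using assms(1-3) by (simp add: linear_diff linear_cmul inner_diff_right algebra_simps)
  ultimately show "S y - (\<alpha> + \<delta> * (a \<bullet> y - \<alpha>)) *\<^sub>R u \<in> K" by simp
  have "S (\<beta> *\<^sub>R u - y) - (\<delta> * (a \<bullet> (\<beta> *\<^sub>R u - y))) *\<^sub>R u \<in> K"
    using contr hi by blast
  moreover have "S (\<beta> *\<^sub>R u - y) - (\<delta> * (a \<bullet> (\<beta> *\<^sub>R u - y))) *\<^sub>R u
      = (\<beta> - \<delta> * (\<beta> - a \<bullet> y)) *\<^sub>R u - S y"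
    using assms(1-3) by (simp add: linear_diff linear_cmul inner_diff_right algebra_simps)
  ultimately show "(\<beta> - \<delta> * (\<beta> - a \<bullet> y)) *\<^sub>R u - S y \<in> K" by simp
qed

text \<open>In fact \<open>\<delta> \<le> 1\<close>; the factor \<open>max 0 (1 - \<delta>)\<close> just spares us proving it.\<close>

lemma iterated_contraction:
  assumes S: "linear S" "S u = u" "a \<bullet> u = 1"
    and contr: "\<forall>z\<in>K. S z - (\<delta> * (a \<bullet> z)) *\<^sub>R u \<in> K"
    and nonneg: "\<forall>x\<in>K. 0 \<le> a \<bullet> x"
    and "y - \<alpha> *\<^sub>R u \<in> K" "\<beta> *\<^sub>R u - y \<in> K"
  shows "\<exists>\<alpha>' \<beta>'. (S ^^ k) y - \<alpha>' *\<^sub>R u \<in> K \<and> \<beta>' *\<^sub>R u - (S ^^ k) y \<in> K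
           \<and> \<beta>' - \<alpha>' \<le> max 0 (1 - \<delta>) ^ k * (\<beta> - \<alpha>)"
proof (induction k)
  case 0
  then show ?case using assms(6,7) by auto
next
  case (Suc k)
  let ?y = "(S ^^ k) y" and ?d = "max 0 (1 - \<delta>)"
  obtain \<alpha>' \<beta>' where lo: "?y - \<alpha>' *\<^sub>R u \<in> K" and hi: "\<beta>' *\<^sub>R u - ?y \<in> K"
    and width: "\<beta>' - \<alpha>' \<le> ?d ^ k * (\<beta> - \<alpha>)"
    using Suc.IH by blast
  have "(\<beta>' - \<alpha>') *\<^sub>R u = (\<beta>' *\<^sub>R u - ?y) + (?y - \<alpha>' *\<^sub>R u)"
    by (simp add: scaleR_diff_left)
  then have "0 \<le> a \<bullet> ((\<beta>' - \<alpha>') *\<^sub>R u)" using nonneg add_in_K[OF hi lo] by metis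
  then have "0 \<le> \<beta>' - \<alpha>'" using S(3) by simp
  have "(\<beta>' - \<delta> * (\<beta>' - a \<bullet> ?y)) - (\<alpha>' + \<delta> * (a \<bullet> ?y - \<alpha>')) = (1 - \<delta>) * (\<beta>' - \<alpha>')"
    by (simp add: algebra_simps)
  also have "\<dots> \<le> ?d * (\<beta>' - \<alpha>')"
    using \<open>0 \<le> \<beta>' - \<alpha>'\<close> by (intro mult_right_mono) auto
  also have "\<dots> \<le> ?d * (?d ^ k * (\<beta> - \<alpha>))"
    using width by (intro mult_left_mono) auto
  finally have "(\<beta>' - \<delta> * (\<beta>' - a \<bullet> ?y)) - (\<alpha>' + \<delta> * (a \<bullet> ?y - \<alpha>'))
      \<le> ?d ^ Suc k * (\<beta> - \<alpha>)"
    by (simp add: mult.assoc)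
  then show ?case
    using contraction_step[OF S contr lo hi] by auto
qed

lemma abs_le_width_if_not_in_relint:
  assumes "u \<in> relint" "a \<bullet> u = 1" "\<forall>x\<in>K. 0 \<le> a \<bullet> x"
    and "y \<notin> relint" "- y \<notin> relint"
    and lo: "y - \<alpha> *\<^sub>R u \<in> K" and hi: "\<beta> *\<^sub>R u - y \<in> K"
  shows "\<bar>a \<bullet> y\<bar> \<le> \<beta> - \<alpha>"
proof -
  have "\<alpha> \<le> 0"
  proof (rule ccontr)
    assume "\<not> \<alpha> \<le> 0"
    then have "\<alpha> *\<^sub>R u + (y - \<alpha> *\<^sub>R u) \<in> relint"
      using assms(1) lo by (intro add_in_relint scaleR_in_relint) auto
    then show False using assms(4) by simp
  qed
  moreover have "0 \<le> \<beta>"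
  proof (rule ccontr)
    assume "\<not> 0 \<le> \<beta>"
    then have "(- \<beta>) *\<^sub>R u + (\<beta> *\<^sub>R u - y) \<in> relint"
      using assms(1) hi by (intro add_in_relint scaleR_in_relint) auto
    then show False using assms(5) by simp
  qed
  moreover have "0 \<le> a \<bullet> (y - \<alpha> *\<^sub>R u)" "0 \<le> a \<bullet> (\<beta> *\<^sub>R u - y)"
    using assms(3) lo hi by blast+
  ultimately show ?thesis using assms(2) by (simp add: inner_diff_right)
qed

lemma iterates_outside_relint_vanish:
  assumes S: "linear S" "S u = u" "u \<in> relint" "a \<bullet> u = 1"
    and contr: "\<forall>z\<in>K. S z - (\<delta> * (a \<bullet> z)) *\<^sub>R u \<in> K" and "\<delta> > 0"
    and nonneg: "\<forall>x\<in>K. 0 \<le> a \<bullet> x"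
    and "y \<in> E" and outside: "\<And>k. (S ^^ k) y \<notin> relint" "\<And>k. - (S ^^ k) y \<notin> relint"
  shows "(\<lambda>k. a \<bullet> (S ^^ k) y) \<longlonglongrightarrow> 0"
proof -
  let ?d = "max 0 (1 - \<delta>)"
  obtain c where "y + c *\<^sub>R u \<in> K" "c *\<^sub>R u - y \<in> K"
    using relint_order_unit[OF S(3) \<open>y \<in> E\<close>] .
  then have "y - (- c) *\<^sub>R u \<in> K" "c *\<^sub>R u - y \<in> K" by simp_all
  note width = iterated_contraction[OF S(1,2,4) contr nonneg this]
  show ?thesis
  proof (rule Lim_null_comparison)
    have "\<bar>a \<bullet> (S ^^ k) y\<bar> \<le> ?d ^ k * (c - - c)" for k
      using width[of k] abs_le_width_if_not_in_relint[OF S(3,4) nonneg outside(1,2)[of k]]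
      by (meson order_trans)
    then show "\<forall>\<^sub>F k in sequentially. norm (a \<bullet> (S ^^ k) y) \<le> ?d ^ k * (c - - c)"
      by (simp add: always_eventually)
    show "(\<lambda>k. ?d ^ k * (c - - c)) \<longlonglongrightarrow> 0"
      using \<open>\<delta> > 0\<close> by (intro tendsto_mult_left_zero LIMSEQ_power_zero) auto
  qed
qed

end

locale strictly_positive_map = relatively_proper_cone +
  fixes T :: "'a \<Rightarrow> 'a"
  assumes linear_T: "linear T"
    and maps_into_relint: "\<forall>x\<in>K - {0}. T x \<in> top_of_set E interior_of K"
begin

lemma continuous_on_T: "continuous_on S T"
  using linear_T by (simp add: linear_continuous_on linear_conv_bounded_linear)

lemma exists_eigenvector:
  assumes dom: "b > 0" "\<forall>x\<in>K. b * norm x \<le> a \<bullet> x"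
  obtains u r where "u \<in> relint" "r > 0" "T u = r *\<^sub>R u" "a \<bullet> u = 1"
proof -
  let ?S = "K \<inter> {x. a \<bullet> x = 1}"
  have T_base: "T x \<in> relint" "a \<bullet> T x > 0" if "x \<in> ?S" for x
  proof -
    show "T x \<in> relint" using that maps_into_relint by auto
    then show "a \<bullet> T x > 0"
      using relint_subset_K zero_notin_relint nonneg_if_dominating(2)[OF dom] by metis
  qed
  obtain z where z: "z \<in> relint" using relint_nonempty by blast
  then have "z \<in> K" "a \<bullet> z > 0"
    using relint_subset_K zero_notin_relint nonneg_if_dominating(2)[OF dom] by metis+
  then have "(1 / (a \<bullet> z)) *\<^sub>R z \<in> ?S" by (simp add: scaleR_in_K)
  then have "?S \<noteq> {}" by blast
  define f where "f x = (1 / (a \<bullet> T x)) *\<^sub>R T x" for x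
  have "continuous_on ?S f"
    unfolding f_def using T_base(2) by (intro continuous_intros continuous_on_T) (metis less_irrefl)
  moreover have "f \<in> ?S \<rightarrow> ?S"
  proof
    fix x assume x: "x \<in> ?S"
    have "f x \<in> K"
      unfolding f_def using T_base[OF x] by (intro scaleR_in_K relint_subset_K) auto
    moreover have "a \<bullet> f x = 1" unfolding f_def using T_base(2)[OF x] by simp
    ultimately show "f x \<in> ?S" by simp
  qed
  moreover have "convex ?S" using convex_K convex_hyperplane[of a 1] by (rule convex_Int)
  ultimately obtain u where u: "u \<in> ?S" "f u = u"
    using brouwer[OF compact_base[OF dom]] \<open>?S \<noteq> {}\<close> by blast
  define r where "r = a \<bullet> T u"
  have r: "r > 0" using T_base(2)[OF u(1)] by (simp add: r_def)
  have "(1 / r) *\<^sub>R T u = u" using u(2) unfolding f_def r_def by simp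
  then have Tu: "T u = r *\<^sub>R u" using r by (metis scaleR_scaleR scaleR_one
      nonzero_divide_eq_eq order_less_irrefl times_divide_eq_right mult.commute)
  have "(1 / r) *\<^sub>R T u \<in> relint" using T_base(1)[OF u(1)] r by (intro scaleR_in_relint) auto
  then have "u \<in> relint" using Tu r by simp
  then show ?thesis using that r Tu u(1) by auto
qed

lemma exists_uniform_domination:
  assumes dom: "b > 0" "\<forall>x\<in>K. b * norm x \<le> a \<bullet> x" and u: "u \<in> relint"
  obtains \<epsilon> where "\<epsilon> > 0" "\<forall>z\<in>K. T z - (\<epsilon> * (a \<bullet> z)) *\<^sub>R u \<in> K"
proof -
  let ?S = "K \<inter> {x. a \<bullet> x = 1}"
  have "compact (T ` ?S)"
    using compact_base[OF dom] by (intro compact_continuous_image continuous_on_T)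
  moreover have "T ` ?S \<subseteq> relint" using maps_into_relint by auto
  ultimately obtain e where e: "e > 0" "\<forall>x\<in>T ` ?S. \<forall>y\<in>E. dist y x < e \<longrightarrow> y \<in> K"
    by (rule compact_subset_relint_margin)
  have "u \<noteq> 0" using u zero_notin_relint by auto
  define \<epsilon> where "\<epsilon> = e / (2 * norm u)"
  have \<epsilon>: "\<epsilon> > 0" "\<epsilon> * norm u < e" using e(1) \<open>u \<noteq> 0\<close> by (simp_all add: \<epsilon>_def)
  have "T z - (\<epsilon> * (a \<bullet> z)) *\<^sub>R u \<in> K" if z: "z \<in> K" for z
  proof (cases "z = 0")
    case True
    then show ?thesis using linear_T convex_cone_contains_0[OF convex_cone_K] by (simp add: linear_0)
  next
    case False
    define p where "p = a \<bullet> z"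
    have p: "p > 0" using nonneg_if_dominating(2)[OF dom z False] by (simp add: p_def)
    define z' where "z' = (1 / p) *\<^sub>R z"
    have z': "z' \<in> ?S" using z p by (simp add: z'_def p_def scaleR_in_K)
    have "z' \<noteq> 0" using z' by auto
    then have "T z' \<in> E" using z' maps_into_relint relint_subset_E by blast
    then have "T z' - \<epsilon> *\<^sub>R u \<in> E"
      using u relint_subset_E subspace_E by (simp add: subspace_diff subspace_scale)
    moreover have "dist (T z' - \<epsilon> *\<^sub>R u) (T z') < e" using \<epsilon> by (simp add: dist_norm)
    ultimately have "T z' - \<epsilon> *\<^sub>R u \<in> K" using e(2) z' by blast
    then have "p *\<^sub>R (T z' - \<epsilon> *\<^sub>R u) \<in> K" using p by (simp add: scaleR_in_K)
    moreover have "T z = p *\<^sub>R T z'" using p linear_T by (simp add: z'_def linear_cmul)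
    ultimately show ?thesis by (simp add: p_def scaleR_diff_right mult.commute)
  qed
  then show ?thesis using that \<epsilon>(1) by blast
qed

theorem spanning_set_has_iterate_in_relint:
  assumes B: "finite B" "B \<subseteq> E" "E \<subseteq> span B"
  shows "\<exists>v\<in>B. \<exists>k. (T ^^ k) v \<in> relint \<or> - (T ^^ k) v \<in> relint"
proof (rule ccontr)
  assume "\<not> ?thesis"
  then have outside: "(T ^^ k) v \<notin> relint" "- (T ^^ k) v \<notin> relint" if "v \<in> B" for v k
    using that by auto
  obtain a b where dom: "b > 0" "\<forall>x\<in>K. b * norm x \<le> a \<bullet> x"
    using exists_dominating_functional .
  have nonneg: "\<forall>x\<in>K. 0 \<le> a \<bullet> x" using nonneg_if_dominating(1)[OF dom] by blast
  obtain u r where u: "u \<in> relint" "r > 0" "T u = r *\<^sub>R u" "a \<bullet> u = 1"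
    using exists_eigenvector[OF dom] .
  obtain \<epsilon> where \<epsilon>: "\<epsilon> > 0" "\<forall>z\<in>K. T z - (\<epsilon> * (a \<bullet> z)) *\<^sub>R u \<in> K"
    using exists_uniform_domination[OF dom u(1)] .
  define S where "S x = (1 / r) *\<^sub>R T x" for x
  have S_linear: "linear S"
    unfolding S_def
    by (rule linearI) (simp_all add: linear_add[OF linear_T] linear_cmul[OF linear_T] scaleR_add_right)
  have S_u: "S u = u" using u(2,3) by (simp add: S_def)
  have S_contr: "\<forall>z\<in>K. S z - (\<epsilon> / r * (a \<bullet> z)) *\<^sub>R u \<in> K"
  proof
    fix z assume "z \<in> K"
    then have "(1 / r) *\<^sub>R (T z - (\<epsilon> * (a \<bullet> z)) *\<^sub>R u) \<in> K"
      using \<epsilon>(2) u(2) by (simp add: scaleR_in_K)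
    then show "S z - (\<epsilon> / r * (a \<bullet> z)) *\<^sub>R u \<in> K"
      by (simp add: S_def scaleR_diff_right)
  qed
  have S_iter: "(S ^^ k) v = (1 / r) ^ k *\<^sub>R (T ^^ k) v" for k v
    by (induction k) (simp_all add: S_def linear_cmul[OF linear_T])
  have "(\<lambda>k. a \<bullet> (S ^^ k) v) \<longlonglongrightarrow> 0" if v: "v \<in> B" for v
  proof (rule iterates_outside_relint_vanish[OF S_linear S_u u(1,4) S_contr _ nonneg])
    show "\<epsilon> / r > 0" using \<epsilon>(1) u(2) by simp
    show "v \<in> E" using v B(2) by blast
    show "(S ^^ k) v \<notin> relint" "- (S ^^ k) v \<notin> relint" for k
      using outside[OF v, of k] u(2)
      by (simp_all add: S_iter scaleR_in_relint_iff flip: scaleR_minus_right)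
  qed
  moreover have "a \<bullet> u \<noteq> 0" "u \<in> span B" using u(1,4) relint_subset_E B(3) by auto
  ultimately show False
    using iterates_not_all_vanish[OF S_linear S_u _ B(1)] by blast
qed

end

section \<open>Compound matrices and simple vectors\<close>

lemma subspace_ext_space: "subspace (ext_space j :: (real^('n::{finite,linorder} set)) set)"
  unfolding subspace_def ext_space_def by auto

lemma linear_ext_op: "linear (ext_op j A)"
proof (rule linearI)
  show "ext_op j A (x + y) = ext_op j A x + ext_op j A y" for x y
    unfolding ext_op_def by (simp add: vec_eq_iff distrib_left sum.distrib)
  show "ext_op j A (c *\<^sub>R x) = c *\<^sub>R ext_op j A x" for c x
    unfolding ext_op_def by (simp add: vec_eq_iff sum_distrib_left ac_simps)
qed

lemma axis_in_ext_space: "card I = j \<Longrightarrow> axis I 1 \<in> ext_space j"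
  unfolding ext_space_def axis_def by auto

lemma ext_space_subset_span_axis:
  "ext_space j \<subseteq> span ((\<lambda>I. axis I 1) ` {I :: 'n::{finite,linorder} set. card I = j})"
proof
  fix w :: "real^('n set)" assume w: "w \<in> ext_space j"
  have "w = (\<Sum>I\<in>UNIV. w $ I *\<^sub>R axis I 1)"
    using basis_expansion[of w] by (simp add: scalar_mult_eq_scaleR)
  also have "\<dots> = (\<Sum>I | card I = j. w $ I *\<^sub>R axis I 1)"
    using w unfolding ext_space_def by (intro sum.mono_neutral_right) auto
  also have "\<dots> \<in> span ((\<lambda>I. axis I 1) ` {I. card I = j})"
    by (intro span_sum span_scale span_base imageI) simp
  finally show "w \<in> span ((\<lambda>I. axis I 1) ` {I. card I = j})" .
qed

lemma ext_op_wedge: "ext_op j A (wedge j x) = wedge j (\<lambda>m. A *v x m)"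
proof -
  have "ext_op j A (wedge j x) $ I = wedge j (\<lambda>m. A *v x m) $ I" for I
  proof (cases "card I = j")
    case True
    let ?s = "sorted_list_of_set"
    have "wedge j (\<lambda>m. A *v x m) $ I = detj j (\<lambda>r k. \<Sum>i\<in>UNIV. A $ (?s I ! r) $ i * x k $ i)"
      unfolding wedge_def using True by (simp only: vec_lambda_beta simp_thms if_True matrix_vector_mult_def)
    also have "\<dots> = (\<Sum>J | card J = j. detj j (\<lambda>r s. A $ (?s I ! r) $ (?s J ! s))
          * detj j (\<lambda>r k. x k $ (?s J ! r)))"
      by (rule cauchy_binet)
    also have "\<dots> = ext_op j A (wedge j x) $ I"
      unfolding ext_op_def wedge_def using True by simp
    finally show ?thesis by simp
  qed (simp add: ext_op_def wedge_def)
  then show ?thesis by (simp add: vec_eq_iff)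
qed

lemma wedge_in_simple_vecs: "wedge j x \<in> simple_vecs j"
  unfolding simple_vecs_def by blast

lemma ext_op_funpow_simple_vecs:
  "w \<in> simple_vecs j \<Longrightarrow> (ext_op j A ^^ k) w \<in> simple_vecs j"
  by (induction k) (auto simp: simple_vecs_def ext_op_wedge)

lemma uminus_simple_vecs:
  assumes "0 < j" "w \<in> simple_vecs j"
  shows "- w \<in> simple_vecs j"
proof -
  obtain x where w: "w = wedge j x" using assms(2) unfolding simple_vecs_def by blast
  have "detj j (\<lambda>r k. (x(0 := - x 0)) k $ (sorted_list_of_set I ! r))
      = - detj j (\<lambda>r k. x k $ (sorted_list_of_set I ! r))" for I
  proof -
    have "detj j (\<lambda>r k. (x(0 := - x 0)) k $ (sorted_list_of_set I ! r))
        = detj j (\<lambda>r k. if k = 0 then - (x k $ (sorted_list_of_set I ! r)) else x k $ (sorted_list_of_set I ! r))"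
      by (rule detj_cong) auto
    then show ?thesis using detj_uminus_col0[OF assms(1)] by simp
  qed
  then have "- w = wedge j (x(0 := - x 0))"
    unfolding w wedge_def by (simp add: vec_eq_iff)
  then show ?thesis by (simp add: wedge_in_simple_vecs)
qed

lemma axis_eq_wedge:
  fixes I :: "'n::{finite,linorder} set"
  assumes I: "card I = j"
  shows "axis I 1 = wedge j (\<lambda>m. axis (sorted_list_of_set I ! m) 1)"
proof -
  let ?s = "sorted_list_of_set"
  have "wedge j (\<lambda>m. axis (?s I ! m) 1) $ J = (if J = I then 1 else 0)" if J: "card J = j" for J
  proof -
    have w: "wedge j (\<lambda>m. axis (?s I ! m) 1) $ J = detj j (\<lambda>r k. if ?s J ! r = ?s I ! k then 1 else 0)"
      unfolding wedge_def using J by (simp add: axis_def)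
    show ?thesis
    proof (cases "J = I")
      case True
      have "detj j (\<lambda>r k. if ?s J ! r = ?s I ! k then 1 else 0) = detj j (\<lambda>r k. if r = k then 1 else 0)"
        by (rule detj_cong) (use I True in \<open>auto simp: nth_eq_iff_index_eq\<close>)
      then show ?thesis using w True detj_identity by simp
    next
      case False
      then obtain i where i: "i \<in> I" "i \<notin> J"
        using I J by (metis card_subset_eq finite subsetI)
      then obtain k where k: "k < j" "?s I ! k = i"
        using I by (metis in_set_conv_nth finite set_sorted_list_of_set length_sorted_list_of_set)
      have "detj j (\<lambda>r k. if ?s J ! r = ?s I ! k then 1 else 0) = 0"
      proof (rule detj_zero_col[OF k(1)])
        fix r assume "r < j"
        then have "?s J ! r \<in> J"
          using J by (metis finite length_sorted_list_of_set nth_mem set_sorted_list_of_set)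
        then show "(if ?s J ! r = ?s I ! k then 1 else 0) = (0::real)" using i k by auto
      qed
      then show ?thesis using w False by simp
    qed
  qed
  then show ?thesis using I by (auto simp: vec_eq_iff axis_def wedge_def)
qed

lemma strictly_positive_map_ext_op:
  fixes C :: "(real^('n::{finite,linorder} set)) set"
  assumes "proper_cone j C" "j \<le> CARD('n)"
    and "ext_op j A ` (C - {0}) \<subseteq> ext_interior j C"
  shows "strictly_positive_map (ext_space j) C (ext_op j A)"
proof -
  obtain I :: "'n set" where "card I = j"
    using obtain_subset_with_card_n[of j "UNIV :: 'n set"] assms(2) by auto
  then have "axis I (1::real) \<in> ext_space j" by (rule axis_in_ext_space)
  then have nontrivial: "\<exists>v\<in>ext_space j :: (real^('n set)) set. v \<noteq> 0" by (metis axis_eq_0_iff one_neq_zero)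
  show ?thesis
  proof (intro strictly_positive_map.intro strictly_positive_map_axioms.intro
      relatively_proper_cone.intro)
    show "subspace (ext_space j :: (real^('n set)) set)" by (rule subspace_ext_space)
    show "linear (ext_op j A)" by (rule linear_ext_op)
    show "\<forall>x\<in>C - {0}. ext_op j A x \<in> top_of_set (ext_space j) interior_of C"
      using assms(3) unfolding ext_interior_def by blast
  qed (use assms(1) nontrivial in \<open>simp_all add: proper_cone_def ext_interior_def\<close>)
qed

theorem corollary23:
  fixes K :: "nat \<Rightarrow> (real^('n::{finite,linorder} set)) set"
  assumes "STP_structure K"
  shows "\<forall>j\<in>{2..CARD('n)}. \<exists>w. w \<noteq> 0 \<and> w \<in> ext_interior j (K j) \<and> w \<in> simple_vecs j"
proof
  fix j assume j: "j \<in> {2..CARD('n)}"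
  obtain A where "GSTP K A" "TP_structure K"
    using assms unfolding STP_structure_def by blast
  moreover have "j \<in> {1..CARD('n)}" using j by simp
  ultimately have "proper_cone j (K j)" "ext_op j A ` (K j - {0}) \<subseteq> ext_interior j (K j)"
    unfolding TP_structure_def GSTP_def by blast+
  then interpret strictly_positive_map "ext_space j" "K j" "ext_op j A"
    using j by (intro strictly_positive_map_ext_op) auto
  let ?B = "(\<lambda>I. axis I 1) ` {I :: 'n set. card I = j}"
  have "finite ?B" "?B \<subseteq> ext_space j" "ext_space j \<subseteq> span ?B"
    using axis_in_ext_space ext_space_subset_span_axis by simp_all blast
  then obtain I k where I: "card I = j"
    and iter: "(ext_op j A ^^ k) (axis I 1) \<in> relint \<or> - (ext_op j A ^^ k) (axis I 1) \<in> relint"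
    using spanning_set_has_iterate_in_relint by blast
  have simple: "(ext_op j A ^^ k) (axis I 1) \<in> simple_vecs j"
    unfolding axis_eq_wedge[OF I] by (intro ext_op_funpow_simple_vecs wedge_in_simple_vecs)
  moreover have "- (ext_op j A ^^ k) (axis I 1) \<in> simple_vecs j"
    using j by (intro uminus_simple_vecs simple) simp
  ultimately obtain w where w: "w \<in> relint" "w \<in> simple_vecs j"
    using iter by blast
  then have "w \<noteq> 0" using zero_notin_relint by auto
  with w show "\<exists>w. w \<noteq> 0 \<and> w \<in> ext_interior j (K j) \<and> w \<in> simple_vecs j"
    unfolding ext_interior_def by blast
qed

end
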